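(* Let $r>0$. For $i=1,\dots,K$ let $f_i:\mathbb{R}^{n_i}\to\mathbb{R}$ be convex with convex feasible set $\mathcal{X}_i$, and let $\mathcal{A}_i$ be a $g_i(k)$-bounded algorithm for $\min_{x\in\mathcal{X}_i}f_i(x)$ with $g_i(k)=\beta_i/k^r$, $\beta_i>0$. Run the F-LCB algorithm with these base algorithms (deterministic oracles). Then for all $\tau\in\{1,\dots,T\}$: (i) if $r\in(0,1)$, $R_O(\tau)\le O\big((\sum_{i=1}^K\beta_i^{1/r})^{r}\tau^{1-r}\big)$; (ii) if $r=1$, $R_O(\tau)\le O\big(\sum_{i=1}^K\beta_i\log\tau\big)$; (iii) if $r>1$, $R_O(\tau)\le O\big(\sum_{i=1}^K\beta_i\big)$.
   Context: An algorithm $x_{k+1}=\mathcal{A}(x_0,\mathcal{O}(x_0),\dots,x_k,\mathcal{O}(x_k))$ for $\min_{x\in\mathcal{X}}f(x)$ is $g(k)$-bounded if $f(x_k)-f(x^* )\le g(k)$ for every $k\in\mathbb{N}$, where $x^*$ is a minimizer. F-LCB algorithm: start from initial points $x_0^{i}$; run one step of each $\mathcal{A}_i$ to get $x_1^i$, set $k_i=1$ and $LCB_i=f_i(x_{1}^{i})-g_i(1)$. For $t=1,\dots,T$: choose $i_t=\arg\min_{1\le i\le K}LCB_i$; run one more step of $\mathcal{A}_{i_t}$ to obtain $x^{i_t}_{k_{i_t}+1}$; set $LCB_{i_t}=f_{i_t}(x^{i_t}_{k_{i_t}+1})-g_{i_t}(k_{i_t}+1)$ (other indices unchanged); increase $k_{i_t}$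 by one. Let $k_{i,t}$ be the number of updates of arm $i$ by time $t$ and $x^{i,k}$ the $k$-th iterate of arm $i$. The regret is $R_O(\tau)=\sum_{t=1}^{\tau}\big[f_{i_t}(x^{i_t,k_{i_t,t}})-f^*\big]$ with $f^*=\min_i\min_{x\in\mathcal{X}_i}f_i(x)$. *)

theory Defs
  imports "HOL-Analysis.Analysis"
begin

text \<open>Points of R^n are represented as functions nat \<Rightarrow> real vanishing from index n on.\<close>

definition Rn :: "nat \<Rightarrow> (nat \<Rightarrow> real) set" where
  "Rn n = {x. \<forall>j\<ge>n. x j = 0}"

definition convex_set_Rn :: "(nat \<Rightarrow> real) set \<Rightarrow> bool" where
  "convex_set_Rn S \<longleftrightarrow> (\<forall>x\<in>S. \<forall>y\<in>S. \<forall>u::real. 0 \<le> u \<and> u \<le> 1 \<longrightarrow>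
      (\<lambda>j. u * x j + (1 - u) * y j) \<in> S)"

definition convex_fun_Rn :: "(nat \<Rightarrow> real) set \<Rightarrow> ((nat \<Rightarrow> real) \<Rightarrow> real) \<Rightarrow> bool" where
  "convex_fun_Rn S f \<longleftrightarrow> (\<forall>x\<in>S. \<forall>y\<in>S. \<forall>u::real. 0 \<le> u \<and> u \<le> 1 \<longrightarrow>
      f (\<lambda>j. u * x j + (1 - u) * y j) \<le> u * f x + (1 - u) * f y)"

fun alg_hist :: "(('x \<times> 'o) list \<Rightarrow> 'x) \<Rightarrow> ('x \<Rightarrow> 'o) \<Rightarrow> 'x \<Rightarrow> nat \<Rightarrow> 'x list" where
  "alg_hist A Orc x0 0 = [x0]"
| "alg_hist A Orc x0 (Suc k) =
     (let xs = alg_hist A Orc x0 k in xs @ [A (map (\<lambda>x. (x, Orc x)) xs)])"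

definition alg_iter :: "(('x \<times> 'o) list \<Rightarrow> 'x) \<Rightarrow> ('x \<Rightarrow> 'o) \<Rightarrow> 'x \<Rightarrow> nat \<Rightarrow> 'x" where
  "alg_iter A Orc x0 k = last (alg_hist A Orc x0 k)"

definition g_bounded :: "('x \<Rightarrow> real) \<Rightarrow> 'x set \<Rightarrow> (nat \<Rightarrow> real) \<Rightarrow> (nat \<Rightarrow> 'x) \<Rightarrow> bool" where
  "g_bounded f X g xs \<longleftrightarrow>
     (\<exists>xstar\<in>X. (\<forall>y\<in>X. f xstar \<le> f y) \<and>
        (\<forall>k. xs k \<in> X) \<and> (\<forall>k\<ge>1. f (xs k) - f xstar \<le> g k))"

text \<open>F-LCB bookkeeping. sel t (t >= 1) is the arm chosen at round t.
  flcb_cnt sel t i = k_{i,t}: number of updates of arm i by time t (initial step counted).\<close>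

fun flcb_cnt :: "(nat \<Rightarrow> nat) \<Rightarrow> nat \<Rightarrow> nat \<Rightarrow> nat" where
  "flcb_cnt sel 0 i = 1"
| "flcb_cnt sel (Suc t) i = flcb_cnt sel t i + (if sel (Suc t) = i then 1 else 0)"

definition flcb_lcb :: "(nat \<Rightarrow> 'x \<Rightarrow> real) \<Rightarrow> (nat \<Rightarrow> nat \<Rightarrow> real) \<Rightarrow> (nat \<Rightarrow> nat \<Rightarrow> 'x)
      \<Rightarrow> (nat \<Rightarrow> nat) \<Rightarrow> nat \<Rightarrow> nat \<Rightarrow> real" where
  "flcb_lcb f g x sel t i = f i (x i (flcb_cnt sel t i)) - g i (flcb_cnt sel t i)"

definition flcb_run :: "nat \<Rightarrow> (nat \<Rightarrow> 'x \<Rightarrow> real) \<Rightarrow> (nat \<Rightarrow> nat \<Rightarrow> real) \<Rightarrow> (nat \<Rightarrow> nat \<Rightarrow> 'x)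
      \<Rightarrow> nat \<Rightarrow> (nat \<Rightarrow> nat) \<Rightarrow> bool" where
  "flcb_run K f g x T sel \<longleftrightarrow>
     (\<forall>t\<in>{1..T}. sel t < K \<and> (\<forall>j<K. flcb_lcb f g x sel (t - 1) (sel t) \<le> flcb_lcb f g x sel (t - 1) j))"

definition fstar :: "nat \<Rightarrow> (nat \<Rightarrow> 'x \<Rightarrow> real) \<Rightarrow> (nat \<Rightarrow> 'x set) \<Rightarrow> real" where
  "fstar K f X = Min {Inf (f i ` X i) | i. i < K}"

definition flcb_regret :: "nat \<Rightarrow> (nat \<Rightarrow> 'x \<Rightarrow> real) \<Rightarrow> (nat \<Rightarrow> 'x set) \<Rightarrow> (nat \<Rightarrow> nat \<Rightarrow> 'x)
      \<Rightarrow> (nat \<Rightarrow> nat) \<Rightarrow> nat \<Rightarrow> real" where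
  "flcb_regret K f X x sel \<tau> =
     (\<Sum>t=1..\<tau>. f (sel t) (x (sel t) (flcb_cnt sel t (sel t))) - fstar K f X)"

end

theory Submission
  imports Defs
begin

text \<open>In round t, F-LCB pulls an arm i whose lower confidence bound f_i(x^{i,c}) - g_i(c) is at
  most that of an optimal arm, which in turn is at most f^*.  Hence f_i(x^{i,c}) - f^* \<le> g_i(c) and
  the regret of the round is at most g_i(c + 1) + g_i(c) \<le> 2 g_i(c).  Grouping the rounds by arm,
  R_O(\<tau>) \<le> 2 \<Sum>_i \<beta>_i \<Sum>_{k \<le> m_i} k^{-r}, where m_i counts the pulls of arm i and \<Sum>_i m_i = \<tau>.
  By the mean value theorem each k^{-r} is at most the increment of an antiderivative of x^{-r}
  over [k - 1, k], which gives the three regimes; for r < 1 the remaining sum \<Sum>_i \<beta>_i m_i^{1-r} is bounded by Hoelder's inequality with exponents 1/r and 1/(1-r).\<close>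

definition powr_antideriv :: "real \<Rightarrow> real \<Rightarrow> real" where
  "powr_antideriv r x = (if r = 1 then ln x else x powr (1 - r) / (1 - r))"

lemma has_real_derivative_powr_antideriv:
  assumes "x > 0"
  shows "(powr_antideriv r has_real_derivative 1 / x powr r) (at x)"
proof (cases "r = 1")
  case True
  then show ?thesis
    using DERIV_ln_divide[OF assms] assms by (simp add: powr_antideriv_def[abs_def])
next
  case False
  have "((\<lambda>x. x powr (1 - r) / (1 - r)) has_real_derivative (1 - r) * x powr (1 - r - 1) / (1 - r)) (at x)"
    using has_real_derivative_powr[OF assms] by (rule DERIV_cdivide)
  moreover have "(1 - r) * x powr (1 - r - 1) / (1 - r) = 1 / x powr r"
    using False assms by (simp add: powr_minus_divide)
  ultimately show ?thesis
    using False by (simp add: powr_antideriv_def[abs_def])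
qed

lemma inverse_powr_le_powr_antideriv_diff:
  assumes "r \<ge> 0" "m > 0"
  shows "1 / (m + 1) powr r \<le> powr_antideriv r (m + 1) - powr_antideriv r m"
proof -
  obtain z where z: "m < z" "z < m + 1"
    and mvt: "powr_antideriv r (m + 1) - powr_antideriv r m = 1 / z powr r"
    using MVT2[of m "m + 1" "powr_antideriv r" "\<lambda>x. 1 / x powr r"] assms
      has_real_derivative_powr_antideriv by force
  have "z powr r \<le> (m + 1) powr r"
    using z assms by (intro powr_mono2) auto
  then show ?thesis
    unfolding mvt using z assms by (intro divide_left_mono mult_pos_pos) auto
qed

lemma sum_inverse_powr_le_powr_antideriv:
  assumes "r \<ge> 0" "m \<ge> 1"
  shows "(\<Sum>k=1..m. 1 / real k powr r) \<le> 1 + powr_antideriv r m - powr_antideriv r 1"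
  using assms(2)
proof (induction m rule: dec_induct)
  case base
  then show ?case by simp
next
  case (step m)
  have "1 / (real m + 1) powr r \<le> powr_antideriv r (real m + 1) - powr_antideriv r m"
    using inverse_powr_le_powr_antideriv_diff[of r "real m"] assms step by simp
  then show ?case
    using step.IH by (simp add: add.commute)
qed

lemma sum_inverse_powr_le_lt1:
  assumes "0 \<le> r" "r < 1"
  shows "(\<Sum>k=1..m. 1 / real k powr r) \<le> real m powr (1 - r) / (1 - r)"
proof (cases "m = 0")
  case False
  then have "(\<Sum>k=1..m. 1 / real k powr r) \<le> 1 + (real m powr (1 - r) - 1) / (1 - r)"
    using sum_inverse_powr_le_powr_antideriv[of r m] assms
    by (simp add: powr_antideriv_def diff_divide_distrib)
  also have "\<dots> = (real m powr (1 - r) - r) / (1 - r)"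
    using assms by (simp add: field_simps)
  also have "\<dots> \<le> real m powr (1 - r) / (1 - r)"
    using assms by (intro divide_right_mono) auto
  finally show ?thesis .
qed simp

lemma sum_inverse_le_1_plus_ln:
  assumes "m \<le> n" "1 \<le> n"
  shows "(\<Sum>k=1..m. 1 / real k) \<le> 1 + ln (real n)"
proof (cases "m = 0")
  case False
  then have "(\<Sum>k=1..m. 1 / real k) \<le> 1 + ln (real m)"
    using sum_inverse_powr_le_powr_antideriv[of 1 m] by (simp add: powr_antideriv_def)
  also have "\<dots> \<le> 1 + ln (real n)"
    using assms False by simp
  finally show ?thesis .
qed (use assms in simp)

lemma sum_inverse_powr_le_gt1:
  assumes "1 < r"
  shows "(\<Sum>k=1..m. 1 / real k powr r) \<le> r / (r - 1)"
proof (cases "m = 0")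
  case False
  then have "(\<Sum>k=1..m. 1 / real k powr r) \<le> 1 + (real m powr (1 - r) - 1) / (1 - r)"
    using sum_inverse_powr_le_powr_antideriv[of r m] assms
    by (simp add: powr_antideriv_def diff_divide_distrib)
  also have "\<dots> = 1 + (1 - real m powr (1 - r)) / (r - 1)"
    by (metis minus_diff_eq minus_divide_divide)
  also have "\<dots> \<le> 1 + 1 / (r - 1)"
    using assms by (intro add_left_mono divide_right_mono) auto
  also have "\<dots> = r / (r - 1)"
    using assms by (simp add: field_simps)
  finally show ?thesis .
qed (use assms in simp)

lemma sum_mult_powr_le_Hoelder:
  fixes b m :: "'a \<Rightarrow> real"
  assumes r: "0 < r" "r < 1" and "finite I"
    and b: "\<And>i. i \<in> I \<Longrightarrow> b i \<ge> 0" and m: "\<And>i. i \<in> I \<Longrightarrow> m i \<ge> 0"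
  shows "(\<Sum>i\<in>I. b i * m i powr (1 - r))
           \<le> (\<Sum>i\<in>I. b i powr (1 / r)) powr r * (\<Sum>i\<in>I. m i) powr (1 - r)"
proof -
  define S where "S = (\<Sum>i\<in>I. b i powr (1 / r))"
  define \<tau> where "\<tau> = (\<Sum>i\<in>I. m i)"
  define M where "M = S powr r * \<tau> powr (1 - r)"
  have "S \<ge> 0" "\<tau> \<ge> 0"
    unfolding S_def \<tau>_def using m by (auto intro: sum_nonneg)
  show ?thesis
  proof (cases "S = 0 \<or> \<tau> = 0")
    case True
    then have "b i = 0 \<or> m i = 0" if "i \<in> I" for i
      using that b m \<open>finite I\<close> unfolding S_def \<tau>_def by (auto simp: sum_nonneg_eq_0_iff)
    then have "(\<Sum>i\<in>I. b i * m i powr (1 - r)) = 0"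
      by (intro sum.neutral) auto
    then show ?thesis by simp
  next
    case False
    with \<open>S \<ge> 0\<close> \<open>\<tau> \<ge> 0\<close> have "S > 0" "\<tau> > 0" "M > 0"
      unfolding M_def by auto
    have young: "b i * m i powr (1 - r) \<le> M * (r * (b i powr (1 / r) / S) + (1 - r) * (m i / \<tau>))"
      if i: "i \<in> I" for i
    proof (cases "b i = 0 \<or> m i = 0")
      case True
      then show ?thesis
        using b[OF i] m[OF i] \<open>S > 0\<close> \<open>\<tau> > 0\<close> \<open>M > 0\<close> r by auto
    next
      case False
      with b[OF i] m[OF i] have "b i > 0" "m i > 0" by auto
      have "b i * m i powr (1 - r) = M * ((b i powr (1 / r) / S) powr r * (m i / \<tau>) powr (1 - r))"
        unfolding M_def using r \<open>b i > 0\<close> \<open>S > 0\<close> \<open>\<tau> > 0\<close>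
        by (simp add: powr_divide powr_powr)
      also have "\<dots> \<le> M * (r * (b i powr (1 / r) / S) + (1 - r) * (m i / \<tau>))"
        using r \<open>b i > 0\<close> \<open>m i > 0\<close> \<open>S > 0\<close> \<open>\<tau> > 0\<close> \<open>M > 0\<close>
        by (intro mult_left_mono Youngs_inequality_0) auto
      finally show ?thesis .
    qed
    have "(\<Sum>i\<in>I. b i * m i powr (1 - r))
            \<le> (\<Sum>i\<in>I. M * (r * (b i powr (1 / r) / S) + (1 - r) * (m i / \<tau>)))"
      using young by (rule sum_mono)
    also have "\<dots> = M * (r * ((\<Sum>i\<in>I. b i powr (1 / r)) / S) + (1 - r) * ((\<Sum>i\<in>I. m i) / \<tau>))"
      by (simp add: sum_distrib_left sum.distrib sum_divide_distrib[symmetric] algebra_simps)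
    also have "\<dots> = M"
      using \<open>S > 0\<close> \<open>\<tau> > 0\<close> unfolding S_def[symmetric] \<tau>_def[symmetric] by simp
    finally show ?thesis
      unfolding M_def S_def \<tau>_def .
  qed
qed

lemma flcb_cnt_ge_1: "flcb_cnt sel t i \<ge> 1"
  by (induction t) auto

lemma sum_rounds_eq_sum_arms:
  fixes h :: "nat \<Rightarrow> nat \<Rightarrow> real"
  assumes "\<forall>t\<in>{1..\<tau>}. sel t < K"
  shows "(\<Sum>t=1..\<tau>. h (sel t) (flcb_cnt sel (t - 1) (sel t)))
           = (\<Sum>i<K. \<Sum>k=1..flcb_cnt sel \<tau> i - 1. h i k)"
  using assms
proof (induction \<tau>)
  case 0
  then show ?case by simp
next
  case (Suc \<tau>)
  define s where "s = sel (Suc \<tau>)"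
  have "s < K"
    using Suc.prems s_def by auto
  have arm: "(\<Sum>k=1..flcb_cnt sel (Suc \<tau>) i - 1. h i k)
               = (\<Sum>k=1..flcb_cnt sel \<tau> i - 1. h i k) + (if i = s then h i (flcb_cnt sel \<tau> i) else 0)"
    for i
    using flcb_cnt_ge_1[of sel \<tau> i] by (cases "flcb_cnt sel \<tau> i") (auto simp: s_def)
  have "(\<Sum>i<K. \<Sum>k=1..flcb_cnt sel (Suc \<tau>) i - 1. h i k)
          = (\<Sum>i<K. \<Sum>k=1..flcb_cnt sel \<tau> i - 1. h i k) + h s (flcb_cnt sel \<tau> s)"
    unfolding arm sum.distrib using \<open>s < K\<close> by simp
  then show ?case
    using Suc by (simp add: s_def)
qed

lemma sum_flcb_cnt_minus_1:
  assumes "\<forall>t\<in>{1..\<tau>}. sel t < K"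
  shows "(\<Sum>i<K. real (flcb_cnt sel \<tau> i - 1)) = real \<tau>"
  using sum_rounds_eq_sum_arms[OF assms, of "\<lambda>_ _. 1"] by simp

lemma g_bounded_Inf_le:
  assumes "g_bounded f X g xs"
  shows "Inf (f ` X) \<le> f (xs k)"
proof -
  obtain xstar where "xstar \<in> X" "\<forall>y\<in>X. f xstar \<le> f y" "xs k \<in> X"
    using assms unfolding g_bounded_def by blast
  moreover from this have "Inf (f ` X) = f xstar"
    by (intro cInf_eq_minimum) auto
  ultimately show ?thesis by simp
qed

lemma g_bounded_gap_le:
  assumes "g_bounded f X g xs" "k \<ge> 1"
  shows "f (xs k) - Inf (f ` X) \<le> g k"
proof -
  obtain xstar where "xstar \<in> X" "\<forall>y\<in>X. f xstar \<le> f y" "f (xs k) - f xstar \<le> g k"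
    using assms unfolding g_bounded_def by blast
  moreover from this have "Inf (f ` X) = f xstar"
    by (intro cInf_eq_minimum) auto
  ultimately show ?thesis by simp
qed

lemma fstar_eq_Inf:
  assumes "K \<ge> 1"
  obtains j where "j < K" "fstar K f X = Inf (f j ` X j)"
proof -
  have arms: "{Inf (f i ` X i) | i. i < K} = (\<lambda>i. Inf (f i ` X i)) ` {..<K}"
    by auto
  have "fstar K f X \<in> (\<lambda>i. Inf (f i ` X i)) ` {..<K}"
    unfolding fstar_def arms using assms by (intro Min_in) (auto simp: lessThan_empty_iff)
  then show ?thesis
    using that by auto
qed

lemma flcb_round_regret_le:
  assumes run: "flcb_run K f g x T sel" and "K \<ge> 1" and t: "t \<in> {1..T}"
    and bounded: "\<forall>i<K. g_bounded (f i) (X i) (g i) (x i)"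
    and decreasing: "\<forall>i<K. \<forall>k\<ge>1. g i (Suc k) \<le> g i k"
  shows "f (sel t) (x (sel t) (flcb_cnt sel t (sel t))) - fstar K f X
           \<le> 2 * g (sel t) (flcb_cnt sel (t - 1) (sel t))"
proof -
  define i where "i = sel t"
  define c where "c = flcb_cnt sel (t - 1) i"
  have "i < K" and chosen: "\<forall>j<K. flcb_lcb f g x sel (t - 1) i \<le> flcb_lcb f g x sel (t - 1) j"
    using run t unfolding flcb_run_def i_def by auto
  have "c \<ge> 1"
    unfolding c_def by (rule flcb_cnt_ge_1)
  have cnt: "flcb_cnt sel t i = Suc c"
    using t unfolding c_def i_def by (cases t) auto
  obtain j where "j < K" and fstar: "fstar K f X = Inf (f j ` X j)"
    using fstar_eq_Inf \<open>K \<ge> 1\<close> by blast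
  have bounded_i: "g_bounded (f i) (X i) (g i) (x i)" and bounded_j: "g_bounded (f j) (X j) (g j) (x j)"
    using bounded \<open>i < K\<close> \<open>j < K\<close> by auto
  have "f i (x i c) - g i c \<le> flcb_lcb f g x sel (t - 1) j"
    using chosen \<open>j < K\<close> unfolding flcb_lcb_def c_def by auto
  also have "\<dots> \<le> fstar K f X"
    using g_bounded_gap_le[OF bounded_j flcb_cnt_ge_1, of sel "t - 1" j] unfolding flcb_lcb_def fstar by simp
  finally have "f i (x i c) - g i c \<le> fstar K f X" .
  moreover have "Inf (f i ` X i) \<le> f i (x i c)"
    by (rule g_bounded_Inf_le[OF bounded_i])
  moreover have "f i (x i (Suc c)) - Inf (f i ` X i) \<le> g i (Suc c)"
    by (rule g_bounded_gap_le[OF bounded_i]) simp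
  moreover have "g i (Suc c) \<le> g i c"
    using decreasing \<open>i < K\<close> \<open>c \<ge> 1\<close> by simp
  ultimately show ?thesis
    unfolding i_def[symmetric] c_def[symmetric] cnt by linarith
qed

lemma flcb_regret_le_sum_g:
  assumes run: "flcb_run K f g x T sel" and "K \<ge> 1" and "\<tau> \<le> T"
    and bounded: "\<forall>i<K. g_bounded (f i) (X i) (g i) (x i)"
    and decreasing: "\<forall>i<K. \<forall>k\<ge>1. g i (Suc k) \<le> g i k"
  shows "flcb_regret K f X x sel \<tau> \<le> 2 * (\<Sum>i<K. \<Sum>k=1..flcb_cnt sel \<tau> i - 1. g i k)"
proof -
  have "flcb_regret K f X x sel \<tau> \<le> (\<Sum>t=1..\<tau>. 2 * g (sel t) (flcb_cnt sel (t - 1) (sel t)))"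
    unfolding flcb_regret_def
    using flcb_round_regret_le[OF run \<open>K \<ge> 1\<close> _ bounded decreasing] \<open>\<tau> \<le> T\<close>
    by (intro sum_mono) auto
  also have "\<dots> = 2 * (\<Sum>i<K. \<Sum>k=1..flcb_cnt sel \<tau> i - 1. g i k)"
    using sum_rounds_eq_sum_arms[of \<tau> sel K "\<lambda>i k. 2 * g i k"] run \<open>\<tau> \<le> T\<close>
    unfolding flcb_run_def by (simp add: sum_distrib_left)
  finally show ?thesis .
qed

definition regret_const :: "real \<Rightarrow> real" where
  "regret_const r = (if r < 1 then 1 / (1 - r) else if r = 1 then 1 else r / (r - 1))"

definition regret_rate :: "real \<Rightarrow> (nat \<Rightarrow> real) \<Rightarrow> nat \<Rightarrow> nat \<Rightarrow> real" where
  "regret_rate r \<beta> K \<tau> =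
     (if r < 1 then (\<Sum>i<K. \<beta> i powr (1 / r)) powr r * real \<tau> powr (1 - r)
      else if r = 1 then (\<Sum>i<K. \<beta> i) * (1 + ln (real \<tau>))
      else (\<Sum>i<K. \<beta> i))"

lemma sum_weighted_inverse_powr_le:
  fixes \<beta> :: "nat \<Rightarrow> real" and m :: "nat \<Rightarrow> nat"
  assumes "r > 0" and \<beta>: "\<forall>i<K. \<beta> i > 0"
    and m: "(\<Sum>i<K. real (m i)) = real \<tau>" and "\<tau> \<ge> 1"
  shows "(\<Sum>i<K. \<beta> i * (\<Sum>k=1..m i. 1 / real k powr r)) \<le> regret_const r * regret_rate r \<beta> K \<tau>"
proof -
  consider "r < 1" | "r = 1" | "r > 1"
    by linarith
  then show ?thesis
  proof cases
    case 1
    have "(\<Sum>i<K. \<beta> i * (\<Sum>k=1..m i. 1 / real k powr r))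
            \<le> (\<Sum>i<K. \<beta> i * (real (m i) powr (1 - r) / (1 - r)))"
      using sum_inverse_powr_le_lt1 \<open>r > 0\<close> 1 \<beta>
      by (intro sum_mono mult_left_mono) (auto simp: less_imp_le)
    also have "\<dots> = (\<Sum>i<K. \<beta> i * real (m i) powr (1 - r)) / (1 - r)"
      by (simp add: sum_divide_distrib)
    also have "\<dots> \<le> (\<Sum>i<K. \<beta> i powr (1 / r)) powr r * (\<Sum>i<K. real (m i)) powr (1 - r) / (1 - r)"
      using \<open>r > 0\<close> 1 \<beta>
      by (intro divide_right_mono sum_mult_powr_le_Hoelder) (auto simp: less_imp_le)
    finally show ?thesis
      using 1 unfolding m regret_const_def regret_rate_def by simp
  next
    case 2
    have "m i \<le> \<tau>" if "i < K" for i
      using member_le_sum[of i "{..<K}" "\<lambda>i. real (m i)"] that unfolding m by auto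
    then have "(\<Sum>i<K. \<beta> i * (\<Sum>k=1..m i. 1 / real k)) \<le> (\<Sum>i<K. \<beta> i * (1 + ln (real \<tau>)))"
      using sum_inverse_le_1_plus_ln \<beta> \<open>\<tau> \<ge> 1\<close>
      by (intro sum_mono mult_left_mono) (auto simp: less_imp_le)
    then show ?thesis
      using 2 unfolding regret_const_def regret_rate_def by (simp add: sum_distrib_right)
  next
    case 3
    have "(\<Sum>i<K. \<beta> i * (\<Sum>k=1..m i. 1 / real k powr r)) \<le> (\<Sum>i<K. \<beta> i * (r / (r - 1)))"
      using sum_inverse_powr_le_gt1[OF 3] \<beta>
      by (intro sum_mono mult_left_mono) (auto simp: less_imp_le)
    also have "\<dots> = (\<Sum>i<K. \<beta> i) * (r / (r - 1))"
      by (rule sum_distrib_right[symmetric])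
    finally show ?thesis
      using 3 unfolding regret_const_def regret_rate_def by (simp add: mult.commute)
  qed
qed

lemma flcb_regret_le_regret_rate:
  assumes "r > 0" and "K \<ge> 1" and \<tau>: "\<tau> \<in> {1..T}"
    and arms: "\<forall>i<K. \<beta> i > 0 \<and> g_bounded (f i) (X i) (\<lambda>k. \<beta> i / real k powr r) (x i)"
    and run: "flcb_run K f (\<lambda>i k. \<beta> i / real k powr r) x T sel"
  shows "flcb_regret K f X x sel \<tau> \<le> 2 * regret_const r * regret_rate r \<beta> K \<tau>"
proof -
  have "\<beta> i / real (Suc k) powr r \<le> \<beta> i / real k powr r" if "i < K" "k \<ge> 1" for i k
    using arms that \<open>r > 0\<close> by (intro divide_left_mono powr_mono2 mult_pos_pos) auto
  then have "flcb_regret K f X x sel \<tau>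
               \<le> 2 * (\<Sum>i<K. \<Sum>k=1..flcb_cnt sel \<tau> i - 1. \<beta> i / real k powr r)"
    using flcb_regret_le_sum_g[OF run \<open>K \<ge> 1\<close>] arms \<tau> by auto
  also have "\<dots> = 2 * (\<Sum>i<K. \<beta> i * (\<Sum>k=1..flcb_cnt sel \<tau> i - 1. 1 / real k powr r))"
    by (simp add: sum_distrib_left)
  also have "\<dots> \<le> 2 * (regret_const r * regret_rate r \<beta> K \<tau>)"
    using sum_weighted_inverse_powr_le \<open>r > 0\<close> arms sum_flcb_cnt_minus_1 run \<tau>
    unfolding flcb_run_def by auto
  finally show ?thesis
    by simp
qed

theorem theorem3:
  fixes r :: real
  assumes "r > 0"
  shows "\<exists>C::real. \<forall>(K::nat) (n::nat \<Rightarrow> nat) (f::nat \<Rightarrow> (nat \<Rightarrow> real) \<Rightarrow> real)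
      (X::nat \<Rightarrow> (nat \<Rightarrow> real) set) (A::nat \<Rightarrow> ((nat \<Rightarrow> real) \<times> 'o) list \<Rightarrow> (nat \<Rightarrow> real))
      (Orc::nat \<Rightarrow> (nat \<Rightarrow> real) \<Rightarrow> 'o) (x0::nat \<Rightarrow> nat \<Rightarrow> real) (\<beta>::nat \<Rightarrow> real)
      (T::nat) (sel::nat \<Rightarrow> nat).
      K \<ge> 1 \<and>
      (\<forall>i<K. convex_fun_Rn (Rn (n i)) (f i) \<and> X i \<subseteq> Rn (n i) \<and> convex_set_Rn (X i) \<and>
              \<beta> i > 0 \<and>
              g_bounded (f i) (X i) (\<lambda>k. \<beta> i / real k powr r) (alg_iter (A i) (Orc i) (x0 i))) \<and>
      flcb_run K f (\<lambda>i k. \<beta> i / real k powr r) (\<lambda>i. alg_iter (A i) (Orc i) (x0 i)) T sel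
      \<longrightarrow> (\<forall>\<tau>\<in>{1..T}.
            flcb_regret K f X (\<lambda>i. alg_iter (A i) (Orc i) (x0 i)) sel \<tau>
            \<le> C * (if r < 1 then (\<Sum>i<K. \<beta> i powr (1 / r)) powr r * real \<tau> powr (1 - r)
                   else if r = 1 then (\<Sum>i<K. \<beta> i) * (1 + ln (real \<tau>))
                   else (\<Sum>i<K. \<beta> i)))"
  unfolding regret_rate_def[symmetric]
  by (intro exI[of _ "2 * regret_const r"] allI impI ballI, elim conjE,
      rule flcb_regret_le_regret_rate[OF assms]) auto

end
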